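(* Let $(S,\mu)$ be a complete, $\sigma$-finite positive measure space and let $X$ be a Banach space whose norm is Fréchet differentiable. Then every non-zero left symmetric point (with respect to Birkhoff–James orthogonality) of $L^1(\mu,X)$ is a smooth point of $L^1(\mu,X)$.
   Context: $L^1(\mu,X)$ is the Lebesgue–Bochner space of (classes of a.e. equal) strongly measurable $f:S\to X$ with $\|f\|=\int_S\|f(s)\|\,d\mu(s)<\infty$. In a normed space $Y$ over $\mathbb{K}$, $x\perp_{BJ}y$ means $\|x+\lambda y\|\ge\|x\|$ for all $\lambda\in\mathbb{K}$; $x$ is a left symmetric point if $x\perp_{BJ}y$ implies $y\perp_{BJ}x$ for all $y\in Y$. A non-zero $x$ is smooth if there is a unique norm-one $F\in Y^*$ with $F(x)=\|x\|$. The norm of $X$ is Fréchet differentiable if for every non-zero $x$ there is $\varphi\in X^*$ with $\lim_{h\to0}\big|\|x+h\|-\|x\|-\varphi(h)\big|/\|h\|=0$. *)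

theory Defs
  imports "HOL-Analysis.Analysis"
begin

text \<open>Scalar field K (a real normed field, i.e. R or C) acting on a real Banach space:
  this encodes a Banach space over K.\<close>
definition scalar_action :: "('k::real_normed_field \<Rightarrow> 'x::real_normed_vector \<Rightarrow> 'x) \<Rightarrow> bool" where
  "scalar_action sc \<longleftrightarrow>
     (\<forall>a x y. sc a (x + y) = sc a x + sc a y) \<and>
     (\<forall>a b x. sc (a + b) x = sc a x + sc b x) \<and>
     (\<forall>a b x. sc (a * b) x = sc a (sc b x)) \<and>
     (\<forall>r x. sc (of_real r) x = r *\<^sub>R x) \<and>
     (\<forall>a x. norm (sc a x) = norm a * norm x)"

definition frechet_diff_norm :: "'x::real_normed_vector itself \<Rightarrow> bool" where
  "frechet_diff_norm _ \<longleftrightarrow> (\<forall>x::'x. x \<noteq> 0 \<longrightarrow> (\<exists>\<phi>. (norm has_derivative \<phi>) (at x)))"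

definition strongly_measurable :: "'s measure \<Rightarrow> ('s \<Rightarrow> 'x::real_normed_vector) \<Rightarrow> bool" where
  "strongly_measurable M f \<longleftrightarrow>
     (\<exists>u::nat \<Rightarrow> 's \<Rightarrow> 'x. (\<forall>n. simple_function M (u n)) \<and>
        (AE s in M. (\<lambda>n. u n s) \<longlonglongrightarrow> f s))"

text \<open>Representatives of elements of the Lebesgue-Bochner space L^1(mu,X).\<close>
definition L1set :: "'s measure \<Rightarrow> ('s \<Rightarrow> 'x::real_normed_vector) set" where
  "L1set M = {f. strongly_measurable M f \<and> (\<integral>\<^sup>+ s. ennreal (norm (f s)) \<partial>M) < \<infinity>}"

definition L1norm :: "'s measure \<Rightarrow> ('s \<Rightarrow> 'x::real_normed_vector) \<Rightarrow> real" where
  "L1norm M f = enn2real (\<integral>\<^sup>+ s. ennreal (norm (f s)) \<partial>M)"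

definition bj_orth :: "('k::real_normed_field \<Rightarrow> 'x::real_normed_vector \<Rightarrow> 'x) \<Rightarrow> 's measure
    \<Rightarrow> ('s \<Rightarrow> 'x) \<Rightarrow> ('s \<Rightarrow> 'x) \<Rightarrow> bool" where
  "bj_orth sc M f g \<longleftrightarrow> (\<forall>c::'k. L1norm M f \<le> L1norm M (\<lambda>s. f s + sc c (g s)))"

definition left_symmetric :: "('k::real_normed_field \<Rightarrow> 'x::real_normed_vector \<Rightarrow> 'x) \<Rightarrow> 's measure
    \<Rightarrow> ('s \<Rightarrow> 'x) \<Rightarrow> bool" where
  "left_symmetric sc M f \<longleftrightarrow>
     f \<in> L1set M \<and> (\<forall>g \<in> L1set M. bj_orth sc M f g \<longrightarrow> bj_orth sc M g f)"

text \<open>Continuous K-linear functionals on L^1(mu,X) (they automatically respect a.e. equality).\<close>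
definition L1_dual :: "('k::real_normed_field \<Rightarrow> 'x::real_normed_vector \<Rightarrow> 'x) \<Rightarrow> 's measure
    \<Rightarrow> (('s \<Rightarrow> 'x) \<Rightarrow> 'k) set" where
  "L1_dual sc M = {F.
     (\<forall>f\<in>L1set M. \<forall>g\<in>L1set M. F (\<lambda>s. f s + g s) = F f + F g) \<and>
     (\<forall>c. \<forall>f\<in>L1set M. F (\<lambda>s. sc c (f s)) = c * F f) \<and>
     (\<exists>K. \<forall>f\<in>L1set M. norm (F f) \<le> K * L1norm M f)}"

definition dual_norm :: "'s measure \<Rightarrow> (('s \<Rightarrow> 'x::real_normed_vector) \<Rightarrow> 'k::real_normed_field) \<Rightarrow> real" where
  "dual_norm M F = (SUP f \<in> {f \<in> L1set M. L1norm M f \<le> 1}. norm (F f))"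

definition support_functional :: "('k::real_normed_field \<Rightarrow> 'x::real_normed_vector \<Rightarrow> 'x) \<Rightarrow> 's measure
    \<Rightarrow> ('s \<Rightarrow> 'x) \<Rightarrow> (('s \<Rightarrow> 'x) \<Rightarrow> 'k) \<Rightarrow> bool" where
  "support_functional sc M f F \<longleftrightarrow>
     F \<in> L1_dual sc M \<and> dual_norm M F = 1 \<and> F f = of_real (L1norm M f)"

definition smooth_point :: "('k::real_normed_field \<Rightarrow> 'x::real_normed_vector \<Rightarrow> 'x) \<Rightarrow> 's measure
    \<Rightarrow> ('s \<Rightarrow> 'x) \<Rightarrow> bool" where
  "smooth_point sc M f \<longleftrightarrow>
     f \<in> L1set M \<and> L1norm M f \<noteq> 0 \<and>
     (\<exists>F. support_functional sc M f F) \<and>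
     (\<forall>F G. support_functional sc M f F \<longrightarrow> support_functional sc M f G \<longrightarrow>
        (\<forall>g\<in>L1set M. F g = G g))"

end

theory Submission
  imports Defs "HOL-Complex_Analysis.Complex_Analysis" "HOL-Real_Asymp.Real_Asymp"
begin

(* A left-symmetric f cannot vanish on a set of positive measure: otherwise add to f a function h
   of the same norm supported there; then f is orthogonal to f + h but not conversely.
   So f(s) <> 0 almost everywhere, and Frechet differentiability of the norm of X together with
   dominated convergence makes t |-> ||f + t h||_1 differentiable at 0, with derivative
   D h = integral of (d||.||)_(f s) (h s).  A support functional G at f satisfies
   ||G (f + t h)|| <= ||f + t h||_1 with equality at t = 0, so psi (G h) = D h, where psi is the
   derivative at 1 of the norm of the scalar field; since psi (c z) for all c determines z, G is
   unique.  Existence: the real functional D has a K-linear representative because a real normed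
   field with a nonzero bounded real functional is R or C, which follows from Liouville's theorem. *)

section \<open>Real normed fields\<close>

lemma resolvent_difference:
  fixes y a b a0 b0 :: "'k::field"
  assumes D: "(y-a)*(y-a) + b*b \<noteq> 0" and D0: "(y-a0)*(y-a0) + b0*b0 \<noteq> 0"
  defines "U \<equiv> (y-a)/((y-a)*(y-a) + b*b)" and "V \<equiv> b/((y-a)*(y-a) + b*b)"
  defines "U0 \<equiv> (y-a0)/((y-a0)*(y-a0) + b0*b0)" and "V0 \<equiv> b0/((y-a0)*(y-a0) + b0*b0)"
  shows "U - U0 = (a-a0)*(U*U0 - V*V0) - (b-b0)*(U*V0 + V*U0)"
    and "V - V0 = (a-a0)*(U*V0 + V*U0) + (b-b0)*(U*U0 - V*V0)"
  using D D0 unfolding U_def V_def U0_def V0_def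
  by (simp_all add: field_simps, algebra+)

text \<open>In \<open>K \<otimes> \<complex>\<close>, \<open>(y - l)\<^sup>-\<^sup>1 = resolvent_re y l + resolvent_im y l \<otimes> i\<close>.\<close>

definition resolvent_denom :: "'k::real_normed_field \<Rightarrow> complex \<Rightarrow> 'k" where
  "resolvent_denom y l = (y - of_real (Re l)) * (y - of_real (Re l)) + of_real (Im l) * of_real (Im l)"

definition resolvent_re :: "'k::real_normed_field \<Rightarrow> complex \<Rightarrow> 'k" where
  "resolvent_re y l = (y - of_real (Re l)) / resolvent_denom y l"

definition resolvent_im :: "'k::real_normed_field \<Rightarrow> complex \<Rightarrow> 'k" where
  "resolvent_im y l = of_real (Im l) / resolvent_denom y l"

lemma resolvent_denom_eq: "resolvent_denom y l = y * y - of_real (2 * Re l) * y + of_real ((norm l)\<^sup>2)"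
  unfolding resolvent_denom_def cmod_power2 by (simp add: algebra_simps power2_eq_square)

lemma norm_resolvent_denom_ge:
  "(norm l)\<^sup>2 - 2 * norm l * norm y - (norm y)\<^sup>2 \<le> norm (resolvent_denom y l)"
proof -
  have "norm (of_real (2 * Re l) * y - y * y) \<le> 2 * \<bar>Re l\<bar> * norm y + (norm y)\<^sup>2"
    using norm_triangle_ineq4[of "of_real (2 * Re l) * y" "y * y"]
    by (simp add: norm_mult power2_eq_square)
  also have "\<dots> \<le> 2 * norm l * norm y + (norm y)\<^sup>2"
    using abs_Re_le_cmod[of l] by (simp add: mult_right_mono)
  finally have "norm (of_real (2 * Re l) * y - y * y) \<le> 2 * norm l * norm y + (norm y)\<^sup>2" .
  moreover have "norm (of_real ((norm l)\<^sup>2) :: 'a) = (norm l)\<^sup>2"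
    by (simp only: norm_of_real) simp
  moreover have "resolvent_denom y l = of_real ((norm l)\<^sup>2) - (of_real (2 * Re l) * y - y * y)"
    unfolding resolvent_denom_eq by (simp add: algebra_simps)
  ultimately show ?thesis
    using norm_triangle_ineq2[of "of_real ((norm l)\<^sup>2)" "of_real (2 * Re l) * y - y * y"]
    by (smt (verit, best))
qed

lemma resolvent_tendsto_0:
  fixes y :: "'k::real_normed_field"
  shows "(resolvent_re y \<longlongrightarrow> 0) at_infinity" and "(resolvent_im y \<longlongrightarrow> 0) at_infinity"
proof -
  define g where "g = (\<lambda>r. (norm y + r) / (r\<^sup>2 - 2 * r * norm y - (norm y)\<^sup>2))"
  have "(g \<longlongrightarrow> 0) at_top" "\<forall>\<^sub>F r in at_top. 0 < r\<^sup>2 - 2 * r * norm y - (norm y)\<^sup>2"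
    unfolding g_def by real_asymp+
  hence g_lim: "((\<lambda>l. g (norm l)) \<longlongrightarrow> 0) at_infinity"
    and large: "\<forall>\<^sub>F l in at_infinity. 0 < (norm l)\<^sup>2 - 2 * norm l * norm y - (norm y)\<^sup>2"
    using filterlim_compose filterlim_norm_at_top eventually_compose_filterlim by blast+
  have "\<forall>\<^sub>F l in at_infinity. norm (resolvent_re y l) \<le> g (norm l) \<and> norm (resolvent_im y l) \<le> g (norm l)"
    using large
  proof eventually_elim
    case (elim l)
    have "norm (y - of_real (Re l)) \<le> norm y + norm l"
      using norm_triangle_ineq4[of y "of_real (Re l)"] abs_Re_le_cmod[of l] by simp
    moreover have "norm (of_real (Im l) :: 'k) \<le> norm y + norm l"
      using abs_Im_le_cmod[of l] norm_ge_zero[of y] by (simp add: add_increasing)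
    ultimately show ?case
      unfolding resolvent_re_def resolvent_im_def g_def norm_divide
      using elim norm_resolvent_denom_ge[of l y] by (auto intro!: frac_le)
  qed
  thus "(resolvent_re y \<longlongrightarrow> 0) at_infinity" "(resolvent_im y \<longlongrightarrow> 0) at_infinity"
    by (auto intro: Lim_null_comparison[OF _ g_lim] elim: eventually_mono)
qed

lemma holomorphic_on_resolvent:
  fixes y :: "'k::real_normed_field" and p :: "'k \<Rightarrow> real"
  assumes p: "bounded_linear p" and nonzero: "\<And>l. resolvent_denom y l \<noteq> 0"
  shows "(\<lambda>l. Complex (p (resolvent_re y l)) (p (resolvent_im y l))) holomorphic_on UNIV"
proof -
  let ?U = "resolvent_re y" and ?V = "resolvent_im y"
  let ?Psi = "\<lambda>l. Complex (p (?U l)) (p (?V l))"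
  have p_diff: "p (w1 - w2) = p w1 - p w2" and p_add: "p (w1 + w2) = p w1 + p w2" for w1 w2
    using linear_diff linear_add bounded_linear.linear[OF p] by blast+
  have p_of_real_mult: "p (of_real r * w) = r * p w" for r w
    using linear_scale[OF bounded_linear.linear[OF p]] by (simp add: scaleR_conv_of_real)
  have U_cont: "isCont ?U l" and V_cont: "isCont ?V l" for l
    unfolding resolvent_re_def resolvent_im_def resolvent_denom_def
    using nonzero[unfolded resolvent_denom_def] by (auto intro!: continuous_intros)
  have "?Psi field_differentiable at l0" for l0
  proof -
    let ?q = "\<lambda>l. Complex (p (?U l * ?U l0 - ?V l * ?V l0)) (p (?U l * ?V l0 + ?V l * ?U l0))"
    have "?Psi l - ?Psi l0 = (l - l0) * ?q l" for l
    proof -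
      note difference =
        resolvent_difference[of y "of_real (Re l)" "of_real (Im l)" "of_real (Re l0)" "of_real (Im l0)",
          folded resolvent_denom_def resolvent_re_def resolvent_im_def, OF nonzero nonzero]
      have "p (?U l) - p (?U l0)
          = (Re l - Re l0) * p (?U l * ?U l0 - ?V l * ?V l0) - (Im l - Im l0) * p (?U l * ?V l0 + ?V l * ?U l0)"
        unfolding p_diff[symmetric] difference(1) by (simp only: p_diff p_of_real_mult of_real_diff[symmetric])
      moreover have "p (?V l) - p (?V l0)
          = (Re l - Re l0) * p (?U l * ?V l0 + ?V l * ?U l0) + (Im l - Im l0) * p (?U l * ?U l0 - ?V l * ?V l0)"
        unfolding p_diff[symmetric] difference(2) by (simp only: p_add p_of_real_mult of_real_diff[symmetric])
      ultimately show ?thesis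
        unfolding complex_eq_iff by (simp add: algebra_simps)
    qed
    hence quotient: "(?Psi l - ?Psi l0) / (l - l0) = ?q l" if "l \<noteq> l0" for l
      using that by simp
    have "(?q \<longlongrightarrow> ?q l0) (at l0)"
      using U_cont[of l0] V_cont[of l0] unfolding isCont_def
      by (intro tendsto_Complex bounded_linear.tendsto[OF p] tendsto_intros) auto
    hence "(?Psi has_field_derivative ?q l0) (at l0)"
      unfolding has_field_derivative_iff by (rule Lim_transform_within[OF _ zero_less_one]) (simp add: quotient)
    thus ?thesis
      unfolding field_differentiable_def by blast
  qed
  thus ?thesis
    by (simp add: holomorphic_on_def field_differentiable_at_within)
qed

lemma real_normed_field_real_quadratic:
  fixes y :: "'k::real_normed_field" and psi :: "'k \<Rightarrow> real"
  assumes psi: "bounded_linear psi" and psi_1: "psi 1 = 1"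
  shows "\<exists>s t::real. y * y - of_real s * y + of_real t = 0"
proof (rule ccontr)
  assume "\<not> ?thesis"
  hence nonzero: "resolvent_denom y l \<noteq> 0" for l
    unfolding resolvent_denom_eq by metis
  define p where "p w = psi (y * w)" for w
  have p: "bounded_linear p"
    unfolding p_def by (rule bounded_linear_compose[OF psi bounded_linear_mult_right])
  define Psi where "Psi l = Complex (p (resolvent_re y l)) (p (resolvent_im y l))" for l
  have "Psi holomorphic_on UNIV"
    unfolding Psi_def by (rule holomorphic_on_resolvent[OF p nonzero])
  moreover have "(Psi \<longlongrightarrow> Complex (p 0) (p 0)) at_infinity"
    unfolding Psi_def using resolvent_tendsto_0
    by (intro tendsto_Complex bounded_linear.tendsto[OF p])
  hence "(Psi \<longlongrightarrow> 0) at_infinity"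
    using linear_0[OF bounded_linear.linear[OF p]] by (simp add: Complex_eq)
  ultimately have "Psi 0 = 0"
    by (rule Liouville_weak_0)
  moreover have "y \<noteq> 0"
    using nonzero[of 0] by (auto simp: resolvent_denom_def)
  ultimately show False
    using psi_1 unfolding Psi_def p_def resolvent_re_def resolvent_denom_def by (simp add: complex_eq_iff)
qed

lemma real_quadratic_root_cases:
  fixes c :: "'k::real_normed_field"
  assumes "c * c - of_real s * c + of_real t = 0"
  shows "c \<in> \<real> \<or> (\<exists>j a b. j * j = -1 \<and> c = of_real a + of_real b * j)"
proof -
  define w where "w = c - of_real (s / 2)"
  define d where "d = s * s / 4 - t"
  have w2: "w * w = of_real d"
  proof -
    have "w * w = (c * c - of_real s * c + of_real t) + of_real d"
      unfolding w_def d_def by (simp add: algebra_simps flip: of_real_mult)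
    thus ?thesis
      using assms by simp
  qed
  show ?thesis
  proof (cases "d \<ge> 0")
    case True
    have "(w - of_real (sqrt d)) * (w + of_real (sqrt d)) = 0"
      using w2 True by (simp add: algebra_simps flip: of_real_mult)
    hence "w = of_real (sqrt d) \<or> w = of_real (- sqrt d)"
      by (auto simp: add_eq_0_iff2)
    hence "c \<in> \<real>"
      unfolding w_def by (metis Reals_add Reals_of_real diff_add_cancel)
    thus ?thesis ..
  next
    case False
    define q where "q = sqrt (- d)"
    have q: "q > 0" "q * q = - d"
      using False unfolding q_def by auto
    have "(w / of_real q) * (w / of_real q) = -1"
      using w2 q False by (simp add: field_simps flip: of_real_mult)
    moreover have "c = of_real (s / 2) + of_real q * (w / of_real q)"
      unfolding w_def using q by simp
    ultimately show ?thesis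
      by blast
  qed
qed

lemma real_normed_field_cases:
  assumes quadratic: "\<And>y::'k::real_normed_field. \<exists>s t::real. y * y - of_real s * y + of_real t = 0"
  obtains (real) "\<forall>c::'k::real_normed_field. c \<in> \<real>"
    | (complex) i :: "'k::real_normed_field" where "i * i = -1" "\<forall>c. \<exists>a b. c = of_real a + of_real b * i"
proof (cases "\<forall>c::'k. c \<in> \<real>")
  case True
  thus thesis by (rule real)
next
  case False
  then obtain c0 :: 'k where "c0 \<notin> \<real>" by blast
  moreover obtain s t where "c0 * c0 - of_real s * c0 + of_real t = 0"
    using quadratic by blast
  ultimately obtain i :: 'k where i: "i * i = -1"
    using real_quadratic_root_cases by blast
  have "\<exists>a b. c = of_real a + of_real b * i" for c
  proof -
    obtain s t where "c * c - of_real s * c + of_real t = 0"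
      using quadratic by blast
    from real_quadratic_root_cases[OF this] show ?thesis
    proof
      assume "c \<in> \<real>"
      then obtain r where "c = of_real r + of_real 0 * i"
        by (auto elim: Reals_cases)
      thus ?thesis by blast
    next
      assume "\<exists>j a b. j * j = -1 \<and> c = of_real a + of_real b * j"
      then obtain j a b where j: "j * j = -1" "c = of_real a + of_real b * j"
        by blast
      have "(j - i) * (j + i) = 0"
        using i j(1) by (simp add: algebra_simps)
      hence "j = i \<or> j = - i"
        by (simp add: eq_neg_iff_add_eq_0)
      hence "c = of_real a + of_real b * i \<or> c = of_real a + of_real (- b) * i"
        using j(2) by auto
      thus ?thesis by blast
    qed
  qed
  with i show thesis
    by (intro complex) auto
qed

lemma real_functional_representation:
  fixes psi l :: "'k::real_normed_field \<Rightarrow> real"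
  assumes psi: "bounded_linear psi" and psi_1: "psi 1 = 1" and l: "linear l"
  shows "\<exists>z. \<forall>c. psi (c * z) = l c"
proof -
  have psi_of_real_mult: "psi (of_real r * w) = r * psi w" for r w
    using linear_scale[OF bounded_linear.linear[OF psi]] by (simp add: scaleR_conv_of_real)
  have psi_add: "psi (w1 + w2) = psi w1 + psi w2" for w1 w2
    using linear_add[OF bounded_linear.linear[OF psi]] .
  have l_of_real_mult: "l (of_real r * w) = r * l w" for r w
    using linear_scale[OF l] by (simp add: scaleR_conv_of_real)
  have l_add: "l (w1 + w2) = l w1 + l w2" for w1 w2
    using linear_add[OF l] .
  from real_normed_field_real_quadratic[OF psi psi_1]
  show ?thesis
  proof (cases rule: real_normed_field_cases)
    case real
    have "psi (c * of_real (l 1)) = l c" for c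
    proof -
      obtain r where "c = of_real r"
        using real Reals_cases by blast
      thus ?thesis
        using psi_of_real_mult[of "r * l 1" 1] l_of_real_mult[of r 1] psi_1
        by (simp flip: of_real_mult)
    qed
    thus ?thesis by blast
  next
    case (complex i)
    \<comment> \<open>\<open>z = a0 + b0 i\<close> with \<open>(a0, b0)\<close> solving \<open>psi z = l 1\<close>, \<open>psi (i z) = l i\<close>\<close>
    define p where "p = psi i"
    define b0 where "b0 = (l 1 * p - l i) / (1 + p * p)"
    define a0 where "a0 = l 1 - b0 * p"
    have "1 + p * p > 0"
      by (simp add: add_pos_nonneg)
    hence "b0 * (1 + p * p) = l 1 * p - l i"
      unfolding b0_def by simp
    hence a0_b0: "a0 + b0 * p = l 1" "a0 * p - b0 = l i"
      unfolding a0_def by (simp_all add: algebra_simps)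
    have "psi (c * (of_real a0 + of_real b0 * i)) = l c" for c
    proof -
      obtain a b where c: "c = of_real a + of_real b * i"
        using complex(2) by blast
      have "c * (of_real a0 + of_real b0 * i)
          = of_real a * of_real a0 + of_real b * of_real b0 * (i * i) + (of_real a * of_real b0 + of_real b * of_real a0) * i"
        unfolding c by (simp add: algebra_simps)
      also have "\<dots> = of_real (a * a0 - b * b0) * 1 + of_real (a * b0 + b * a0) * i"
        unfolding complex(1) by simp
      finally have "psi (c * (of_real a0 + of_real b0 * i)) = a * (a0 + b0 * p) + b * (a0 * p - b0)"
        unfolding p_def by (simp only: psi_add psi_of_real_mult psi_1) (simp add: algebra_simps)
      thus ?thesis
        unfolding a0_b0 c by (simp add: l_add l_of_real_mult[of a 1, simplified] l_of_real_mult)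
    qed
    thus ?thesis by blast
  qed
qed

lemma real_functional_representation_unique:
  fixes psi :: "'k::real_normed_field \<Rightarrow> real"
  assumes psi: "linear psi" "psi 1 = 1" and eq: "\<And>c. psi (c * z) = psi (c * w)"
  shows "z = w"
proof (rule ccontr)
  assume "z \<noteq> w"
  hence "inverse (z - w) * z - inverse (z - w) * w = 1"
    by (simp flip: right_diff_distrib)
  hence "psi (inverse (z - w) * z) - psi (inverse (z - w) * w) = 1"
    using psi by (metis linear_diff)
  thus False
    using eq by simp
qed

section \<open>The derivative of the norm\<close>

definition norm_deriv :: "'x::real_normed_vector \<Rightarrow> 'x \<Rightarrow> real" where
  "norm_deriv x = (if x = 0 then (\<lambda>_. 0) else (SOME \<phi>. (norm has_derivative \<phi>) (at x)))"
  \<comment> \<open>the norm is not differentiable at \<open>0\<close>; the value \<open>0\<close> there is a convention\<close>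

lemma norm_has_derivative_norm_deriv:
  assumes "frechet_diff_norm TYPE('x::real_normed_vector)" and "(x::'x) \<noteq> 0"
  shows "(norm has_derivative norm_deriv x) (at x)"
proof -
  have "\<exists>\<phi>. (norm has_derivative \<phi>) (at x)"
    using assms unfolding frechet_diff_norm_def by blast
  hence "(norm has_derivative (SOME \<phi>. (norm has_derivative \<phi>) (at x))) (at x)"
    by (rule someI_ex)
  thus ?thesis
    using assms(2) unfolding norm_deriv_def by simp
qed

lemma bounded_linear_norm_deriv:
  assumes "frechet_diff_norm TYPE('x::real_normed_vector)"
  shows "bounded_linear (norm_deriv (x::'x))"
proof (cases "x = 0")
  case True
  thus ?thesis
    unfolding norm_deriv_def by (simp add: bounded_linear_zero)
next
  case False
  thus ?thesis
    using norm_has_derivative_norm_deriv[OF assms] has_derivative_bounded_linear by blast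
qed

lemma norm_deriv_directional:
  assumes "frechet_diff_norm TYPE('x::real_normed_vector)" and "(x::'x) \<noteq> 0"
  shows "((\<lambda>t. norm (x + t *\<^sub>R v)) has_real_derivative norm_deriv x v) (at 0)"
proof -
  have "((\<lambda>t::real. x + t *\<^sub>R v) has_derivative (\<lambda>t. t *\<^sub>R v)) (at 0)"
    by (auto intro!: derivative_eq_intros)
  from has_derivative_compose[OF this] norm_has_derivative_norm_deriv[OF assms]
  have "((\<lambda>t. norm (x + t *\<^sub>R v)) has_derivative (\<lambda>t. norm_deriv x (t *\<^sub>R v))) (at 0)"
    by simp
  moreover have "(\<lambda>t. norm_deriv x (t *\<^sub>R v)) = (*) (norm_deriv x v)"
    using linear_scale[OF bounded_linear.linear[OF bounded_linear_norm_deriv[OF assms(1)]]]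
    by (auto simp: mult.commute)
  ultimately show ?thesis
    unfolding has_field_derivative_def by simp
qed

lemma abs_norm_difference_quotient_le:
  fixes x v :: "'x::real_normed_vector"
  shows "\<bar>(norm (x + t *\<^sub>R v) - norm x) / t\<bar> \<le> norm v"
proof (cases "t = 0")
  case False
  have "\<bar>norm (x + t *\<^sub>R v) - norm x\<bar> \<le> \<bar>t\<bar> * norm v"
    using norm_triangle_ineq3[of "x + t *\<^sub>R v" x] by simp
  thus ?thesis
    using False by (simp add: abs_divide divide_le_eq mult.commute)
qed simp

lemma abs_norm_deriv_le:
  assumes "frechet_diff_norm TYPE('x::real_normed_vector)"
  shows "\<bar>norm_deriv (x::'x) v\<bar> \<le> norm v"
proof (cases "x = 0")
  case False
  have "((\<lambda>t. (norm (x + t *\<^sub>R v) - norm x) / t) \<longlongrightarrow> norm_deriv x v) (at 0)"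
    using norm_deriv_directional[OF assms False, of v] unfolding DERIV_def by simp
  hence "((\<lambda>t. \<bar>(norm (x + t *\<^sub>R v) - norm x) / t\<bar>) \<longlongrightarrow> \<bar>norm_deriv x v\<bar>) (at 0)"
    by (rule tendsto_rabs)
  moreover have "\<forall>\<^sub>F t in at 0. \<bar>(norm (x + t *\<^sub>R v) - norm x) / t\<bar> \<le> norm v"
    by (intro always_eventually allI abs_norm_difference_quotient_le)
  ultimately show ?thesis
    by (intro tendsto_le[OF _ tendsto_const]) simp_all
qed (simp add: norm_deriv_def)

definition scalar_norm_deriv :: "'k::real_normed_field \<Rightarrow> real" where
  "scalar_norm_deriv c = deriv (\<lambda>t. norm (1 + of_real t * c)) 0"

lemma scalar_norm_deriv_1: "scalar_norm_deriv (1 :: 'k::real_normed_field) = 1"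
proof -
  have "((\<lambda>t. 1 + t) has_real_derivative 1) (at 0)"
    by (auto intro!: derivative_eq_intros)
  hence "((\<lambda>t. norm (1 + of_real t * 1 :: 'k)) has_real_derivative 1) (at 0)"
  proof (rule has_field_derivative_transform_within_open[where S = "{-1<..}"])
    show "1 + t = norm (1 + of_real t * 1 :: 'k)" if "t \<in> {-1<..}" for t
    proof -
      have "(1 + of_real t * 1 :: 'k) = of_real (1 + t)"
        by simp
      thus ?thesis
        using that by (simp only: norm_of_real) simp
    qed
  qed auto
  thus ?thesis
    unfolding scalar_norm_deriv_def by (rule DERIV_imp_deriv)
qed

locale normed_space_over =
  fixes sc :: "'k::real_normed_field \<Rightarrow> 'x::real_normed_vector \<Rightarrow> 'x"
  assumes scalar_action: "scalar_action sc"
begin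

lemma add_right: "sc a (x + y) = sc a x + sc a y"
  and add_left: "sc (a + b) x = sc a x + sc b x"
  and mult: "sc (a * b) x = sc a (sc b x)"
  and of_real: "sc (of_real r) x = r *\<^sub>R x"
  and norm: "norm (sc a x) = norm a * norm x"
  using scalar_action unfolding scalar_action_def by auto

lemma one [simp]: "sc 1 x = x"
  using of_real[of 1] by simp

lemma bounded_linear_right: "bounded_linear (sc c)"
proof (rule bounded_linear_intro[where K = "norm c"])
  show "sc c (r *\<^sub>R x) = r *\<^sub>R sc c x" for r x
    by (metis mult mult.commute of_real)
qed (simp_all add: add_right norm mult.commute)

lemma bounded_linear_left: "bounded_linear (\<lambda>c. sc c x)"
proof (rule bounded_linear_intro[where K = "norm x"])
  show "sc (r *\<^sub>R c) x = r *\<^sub>R sc c x" for r c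
    by (simp add: scaleR_conv_of_real mult of_real)
qed (simp_all add: add_left norm)

lemma has_real_derivative_scalar_norm_deriv:
  assumes frechet: "frechet_diff_norm TYPE('x)" and x: "(x::'x) \<noteq> 0"
  shows "((\<lambda>t. norm (1 + of_real t * c)) has_real_derivative scalar_norm_deriv c) (at 0)"
    and "scalar_norm_deriv c = norm_deriv x (sc c x) / norm x"
proof -
  have "norm (1 + of_real t * c) = norm (x + t *\<^sub>R sc c x) / norm x" for t
  proof -
    have "x + t *\<^sub>R sc c x = sc (1 + of_real t * c) x"
      by (simp add: add_left mult of_real)
    thus ?thesis
      using x by (simp add: norm)
  qed
  hence "((\<lambda>t. norm (1 + of_real t * c)) has_real_derivative norm_deriv x (sc c x) / norm x) (at 0)"
    using DERIV_cdivide[OF norm_deriv_directional[OF frechet x]] by simp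
  moreover from this have "scalar_norm_deriv c = norm_deriv x (sc c x) / norm x"
    unfolding scalar_norm_deriv_def by (rule DERIV_imp_deriv)
  ultimately show "((\<lambda>t. norm (1 + of_real t * c)) has_real_derivative scalar_norm_deriv c) (at 0)"
    and "scalar_norm_deriv c = norm_deriv x (sc c x) / norm x"
    by simp_all
qed

lemma norm_deriv_scalar_self:
  assumes "frechet_diff_norm TYPE('x)"
  shows "norm_deriv (x::'x) (sc c x) = norm x * scalar_norm_deriv c"
  using has_real_derivative_scalar_norm_deriv(2)[OF assms] by (cases "x = 0") (simp_all add: norm_deriv_def)

lemma bounded_linear_scalar_norm_deriv:
  assumes frechet: "frechet_diff_norm TYPE('x)" and x: "(x::'x) \<noteq> 0"
  shows "bounded_linear (scalar_norm_deriv :: 'k \<Rightarrow> real)"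
proof -
  have "bounded_linear (\<lambda>c. norm_deriv x (sc c x) / norm x)"
    using bounded_linear_compose[OF bounded_linear_divide
        bounded_linear_compose[OF bounded_linear_norm_deriv[OF frechet, of x] bounded_linear_left[of x]]]
    by simp
  moreover have "scalar_norm_deriv = (\<lambda>c. norm_deriv x (sc c x) / norm x)"
    using has_real_derivative_scalar_norm_deriv(2)[OF assms] by (rule ext)
  ultimately show ?thesis
    by simp
qed

lemma has_real_derivative_norm_affine:
  assumes frechet: "frechet_diff_norm TYPE('x)" and x: "(x::'x) \<noteq> 0" and a: "a > 0"
  shows "((\<lambda>t. norm (of_real a + of_real t * (z::'k))) has_real_derivative scalar_norm_deriv z) (at 0)"
proof -
  have "norm (of_real a + of_real t * z) = norm (1 + of_real t * (z / of_real a)) * a" for t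
  proof -
    have "of_real a + of_real t * z = of_real a * (1 + of_real t * (z / of_real a))"
      using a by (simp add: field_simps)
    thus ?thesis
      using a by (simp add: norm_mult)
  qed
  moreover have "scalar_norm_deriv (z / of_real a) * a = scalar_norm_deriv z"
    using linear_scale[OF bounded_linear.linear[OF bounded_linear_scalar_norm_deriv[OF frechet x]], of "1 / a" z] a
    by (simp add: scaleR_conv_of_real divide_inverse mult.commute)
  moreover have "((\<lambda>t. norm (1 + of_real t * (z / of_real a)) * a) has_real_derivative
      scalar_norm_deriv (z / of_real a) * a) (at 0)"
    by (rule DERIV_cmult_right[OF has_real_derivative_scalar_norm_deriv(1)[OF frechet x]])
  ultimately show ?thesis
    by simp
qed

end

section \<open>Lebesgue--Bochner space \<open>L\<^sup>1\<close>\<close>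

lemma strongly_measurable_simple_function:
  "simple_function M f \<Longrightarrow> strongly_measurable M f"
  unfolding strongly_measurable_def by (intro exI[of _ "\<lambda>n. f"] conjI allI) simp_all

lemma strongly_measurable_compose:
  fixes \<phi> :: "'x::real_normed_vector \<Rightarrow> 'y::real_normed_vector"
  assumes "strongly_measurable M f" and "continuous_on UNIV \<phi>"
  shows "strongly_measurable M (\<lambda>s. \<phi> (f s))"
proof -
  obtain u where u: "\<And>n. simple_function M (u n)" "AE s in M. (\<lambda>n. u n s) \<longlonglongrightarrow> f s"
    using assms(1) unfolding strongly_measurable_def by blast
  have cont: "isCont \<phi> x" for x
    using assms(2) by (simp add: continuous_on_eq_continuous_at)
  show ?thesis
    unfolding strongly_measurable_def
  proof (intro exI[of _ "\<lambda>n s. \<phi> (u n s)"] conjI allI)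
    show "simple_function M (\<lambda>s. \<phi> (u n s))" for n
      using u(1) by (rule simple_function_compose1)
    show "AE s in M. (\<lambda>n. \<phi> (u n s)) \<longlonglongrightarrow> \<phi> (f s)"
      using u(2) by eventually_elim (rule isCont_tendsto_compose[OF cont])
  qed
qed

lemma strongly_measurable_add:
  fixes f g :: "'s \<Rightarrow> 'x::real_normed_vector"
  assumes "strongly_measurable M f" and "strongly_measurable M g"
  shows "strongly_measurable M (\<lambda>s. f s + g s)"
proof -
  obtain u where u: "\<And>n. simple_function M (u n)" "AE s in M. (\<lambda>n. u n s) \<longlonglongrightarrow> f s"
    using assms(1) unfolding strongly_measurable_def by blast
  obtain v where v: "\<And>n. simple_function M (v n)" "AE s in M. (\<lambda>n. v n s) \<longlonglongrightarrow> g s"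
    using assms(2) unfolding strongly_measurable_def by blast
  show ?thesis
    unfolding strongly_measurable_def
  proof (intro exI[of _ "\<lambda>n s. u n s + v n s"] conjI allI)
    show "simple_function M (\<lambda>s. u n s + v n s)" for n
      using u(1) v(1) by (rule simple_function_compose2)
    show "AE s in M. (\<lambda>n. u n s + v n s) \<longlonglongrightarrow> f s + g s"
      using u(2) v(2) by eventually_elim (rule tendsto_add)
  qed
qed

lemma (in sigma_finite_measure) obtain_positive_finite_subset:
  assumes A: "A \<in> sets M" and "emeasure M A \<noteq> 0"
  obtains B where "B \<in> sets M" "B \<subseteq> A" "0 < emeasure M B" "emeasure M B < \<infinity>"
proof (cases "emeasure M A = \<infinity>")
  case True
  obtain Z where "Z \<in> sets M" "Z \<subseteq> A" "emeasure M Z < \<infinity>" "emeasure M Z > 0"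
    by (rule approx_PInf_emeasure_with_finite[OF A True, of 0]) simp
  thus thesis
    using that by blast
next
  case False
  thus thesis
    using that[OF A order.refl] assms(2) by (simp add: less_top zero_less_iff_neq_zero)
qed

lemma strongly_measurable_L1set: "g \<in> L1set M \<Longrightarrow> strongly_measurable M g"
  unfolding L1set_def by simp

lemma L1norm_nonneg [simp]: "L1norm M f \<ge> 0"
  unfolding L1norm_def by simp

lemma L1norm_pos: "L1norm M f \<noteq> 0 \<Longrightarrow> L1norm M f > 0"
  using L1norm_nonneg[of M f] by linarith

lemma ex_nonzero_of_L1norm:
  assumes "L1norm M f \<noteq> 0"
  shows "\<exists>s. f s \<noteq> 0"
proof (rule ccontr)
  assume "\<not> ?thesis"
  thus False
    using assms unfolding L1norm_def by simp
qed

lemma ex_L1set_supported_on: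
  fixes x :: "'x::real_normed_vector"
  assumes B: "B \<in> sets M" "0 < emeasure M B" "emeasure M B < \<infinity>" and x: "x \<noteq> 0" and r: "r \<ge> 0"
  shows "\<exists>h :: 's \<Rightarrow> 'x. h \<in> L1set M \<and> L1norm M h = r \<and> (\<forall>s. s \<notin> B \<longrightarrow> h s = 0)"
proof -
  define m where "m = measure M B"
  have Bm: "emeasure M B = ennreal m" and m: "m > 0"
    using B unfolding m_def by (auto simp: emeasure_eq_ennreal_measure measure_nonneg less_le)
  define h where "h s = indicator B s *\<^sub>R ((r / (m * norm x)) *\<^sub>R x)" for s
  have "(\<integral>\<^sup>+ s. ennreal (norm (h s)) \<partial>M) = (\<integral>\<^sup>+ s. ennreal (r / m) * indicator B s \<partial>M)"
    unfolding h_def using x m r by (intro nn_integral_cong) (simp add: indicator_def)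
  also have "\<dots> = ennreal r"
    using B(1) m r by (simp add: nn_integral_cmult_indicator Bm flip: ennreal_mult)
  finally have norm_h: "(\<integral>\<^sup>+ s. ennreal (norm (h s)) \<partial>M) = ennreal r" .
  have "simple_function M h"
    unfolding h_def using B(1) by (intro simple_function_compose1[where g = "\<lambda>t. t *\<^sub>R _"]) auto
  hence "h \<in> L1set M"
    unfolding L1set_def using norm_h by (simp add: strongly_measurable_simple_function)
  moreover have "L1norm M h = r"
    unfolding L1norm_def norm_h using r by simp
  ultimately show ?thesis
    by (auto simp: h_def)
qed

context complete_measure
begin

lemma borel_measurable_AE_eq:
  fixes f g :: "'a \<Rightarrow> 'b::topological_space"
  assumes g: "g \<in> borel_measurable M" and eq: "AE x in M. f x = g x"
  shows "f \<in> borel_measurable M"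
proof (rule borel_measurableI)
  fix S :: "'b set"
  assume "open S"
  hence "g -` S \<inter> space M \<in> sets M"
    using g by (simp add: borel_open measurable_sets)
  moreover have "AE x in M. x \<in> g -` S \<inter> space M \<longleftrightarrow> x \<in> f -` S \<inter> space M"
    using eq by eventually_elim auto
  ultimately show "f -` S \<inter> space M \<in> sets M"
    using in_sets_AE by blast
qed

lemma borel_measurable_strongly_measurable:
  fixes f :: "'a \<Rightarrow> 'b::real_normed_vector"
  assumes f: "strongly_measurable M f"
  shows "f \<in> borel_measurable M"
proof -
  obtain u where u: "\<And>n. simple_function M (u n)" "AE s in M. (\<lambda>n. u n s) \<longlonglongrightarrow> f s"
    using f unfolding strongly_measurable_def by blast
  obtain N where N: "{s \<in> space M. \<not> (\<lambda>n. u n s) \<longlonglongrightarrow> f s} \<subseteq> N" "emeasure M N = 0" "N \<in> sets M"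
    using u(2) by (rule AE_E)
  define g where "g s = (if s \<in> N then 0 else f s)" for s
  have "g \<in> borel_measurable M"
  proof (rule borel_measurable_LIMSEQ_metric)
    show "(\<lambda>s. if s \<in> N then 0 else u n s) \<in> borel_measurable M" for n
      using N(3) borel_measurable_simple_function[OF u(1)] by (intro measurable_If_set) auto
    show "(\<lambda>n. if s \<in> N then 0 else u n s) \<longlonglongrightarrow> g s" if "s \<in> space M" for s
      using that N(1) unfolding g_def by auto
  qed
  moreover have "N \<in> null_sets M"
    using N(2,3) by (simp add: null_sets_def)
  hence "AE s in M. f s = g s"
    by (rule AE_mp[OF AE_not_in]) (simp add: g_def)
  ultimately show ?thesis
    by (rule borel_measurable_AE_eq)
qed

lemma borel_measurable_norm_L1set: "g \<in> L1set M \<Longrightarrow> (\<lambda>s. norm (g s)) \<in> borel_measurable M"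
  using borel_measurable_strongly_measurable[OF strongly_measurable_L1set] borel_measurable_norm
  by (rule measurable_compose)

lemma integrable_norm_L1set: "g \<in> L1set M \<Longrightarrow> integrable M (\<lambda>s. norm (g s))"
  unfolding integrable_iff_bounded L1set_def using borel_measurable_norm_L1set by (auto simp: L1set_def)

lemma L1norm_eq_integral:
  assumes "g \<in> L1set M"
  shows "L1norm M g = (\<integral>s. norm (g s) \<partial>M)"
  unfolding L1norm_def using nn_integral_eq_integral[OF integrable_norm_L1set[OF assms]]
  by (simp add: integral_nonneg)

lemma L1set_bound:
  assumes k: "strongly_measurable M k" and g: "g \<in> L1set M" and h: "h \<in> L1set M"
    and bound: "\<And>s. norm (k s) \<le> \<alpha> * norm (g s) + \<beta> * norm (h s)"
  shows "k \<in> L1set M"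
proof -
  have "integrable M (\<lambda>s. \<alpha> * norm (g s) + \<beta> * norm (h s))"
    using integrable_norm_L1set[OF g] integrable_norm_L1set[OF h] by simp
  moreover have "(\<lambda>s. norm (k s)) \<in> borel_measurable M"
    using borel_measurable_strongly_measurable[OF k] borel_measurable_norm
    by (rule measurable_compose)
  moreover have "AE s in M. norm (norm (k s)) \<le> norm (\<alpha> * norm (g s) + \<beta> * norm (h s))"
    by (intro AE_I2) (simp add: order_trans[OF bound abs_ge_self])
  ultimately have "integrable M (\<lambda>s. norm (k s))"
    by (rule Bochner_Integration.integrable_bound)
  thus ?thesis
    using k unfolding L1set_def integrable_iff_bounded by simp
qed

lemma L1set_add: "g \<in> L1set M \<Longrightarrow> h \<in> L1set M \<Longrightarrow> (\<lambda>s. g s + h s) \<in> L1set M"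
  by (rule L1set_bound[where g = g and h = h and \<alpha> = 1 and \<beta> = 1])
     (simp_all add: strongly_measurable_add strongly_measurable_L1set norm_triangle_ineq)

lemma L1set_scaleR: "g \<in> L1set M \<Longrightarrow> (\<lambda>s. r *\<^sub>R g s) \<in> L1set M"
  by (rule L1set_bound[where g = g and h = g and \<alpha> = "\<bar>r\<bar>" and \<beta> = 0])
     (simp_all add: strongly_measurable_compose strongly_measurable_L1set
       linear_continuous_on bounded_linear_scaleR_right)

lemma sets_zero_L1set:
  assumes "f \<in> L1set M"
  shows "{s \<in> space M. f s = 0} \<in> sets M"
proof -
  have "{s \<in> space M. norm (f s) = 0} \<in> sets M"
    using borel_measurable_norm_L1set[OF assms] by measurable
  thus ?thesis
    by simp
qed

lemma L1norm_eq_pointwise_combination: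
  assumes k: "k \<in> L1set M" and g: "g \<in> L1set M" and h: "h \<in> L1set M"
    and pointwise: "\<And>s. norm (k s) = \<alpha> * norm (g s) + \<beta> * norm (h s)"
  shows "L1norm M k = \<alpha> * L1norm M g + \<beta> * L1norm M h"
  using integrable_norm_L1set[OF g] integrable_norm_L1set[OF h]
  by (simp add: L1norm_eq_integral[OF k] L1norm_eq_integral[OF g] L1norm_eq_integral[OF h] pointwise)

lemma borel_measurable_difference_quotient:
  assumes "f \<in> L1set M" and "h \<in> L1set M"
  shows "(\<lambda>s. (norm (f s + t *\<^sub>R h s) - norm (f s)) / t) \<in> borel_measurable M"
  using borel_measurable_norm_L1set[OF L1set_add[OF assms(1) L1set_scaleR[OF assms(2)]]]
    borel_measurable_norm_L1set[OF assms(1)]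
  by measurable

end

locale L1_space = normed_space_over sc + complete_measure M
  for sc :: "'k::real_normed_field \<Rightarrow> 'x::real_normed_vector \<Rightarrow> 'x" and M :: "'s measure"
begin

lemma L1set_scalar: "g \<in> L1set M \<Longrightarrow> (\<lambda>s. sc c (g s)) \<in> L1set M"
  by (rule L1set_bound[where g = g and h = g and \<alpha> = "norm c" and \<beta> = 0])
     (simp_all add: strongly_measurable_compose strongly_measurable_L1set
       linear_continuous_on bounded_linear_right norm)

lemma L1norm_scalar: "g \<in> L1set M \<Longrightarrow> L1norm M (\<lambda>s. sc c (g s)) = norm c * L1norm M g"
  by (simp add: L1norm_eq_integral L1set_scalar norm)

lemma not_left_symmetric_disjoint_support:
  assumes f: "(f :: 's \<Rightarrow> 'x) \<in> L1set M" "L1norm M f \<noteq> 0"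
    and h: "(h :: 's \<Rightarrow> 'x) \<in> L1set M" "L1norm M h = L1norm M f"
    and disjoint: "\<And>s. f s = 0 \<or> h s = 0"
  shows "\<not> left_symmetric sc M f"
proof
  assume symmetric: "left_symmetric sc M f"
  define a where "a = L1norm M f"
  have a: "a > 0"
    using L1norm_pos[OF f(2)] unfolding a_def .
  let ?g = "\<lambda>s. f s + h s"
  have g: "?g \<in> L1set M"
    using f(1) h(1) by (rule L1set_add)
  have "L1norm M (\<lambda>s. f s + sc c (?g s)) = (norm (1 + c) + norm c) * a" for c
  proof -
    have "norm (f s + sc c (?g s)) = norm (1 + c) * norm (f s) + norm c * norm (h s)" for s
    proof (cases "h s = 0")
      case True
      hence "f s + sc c (?g s) = sc (1 + c) (f s)"
        by (simp add: add_left)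
      thus ?thesis
        using True by (simp add: norm)
    next
      case False
      thus ?thesis
        using disjoint[of s] by (simp add: norm)
    qed
    hence "L1norm M (\<lambda>s. f s + sc c (?g s)) = norm (1 + c) * L1norm M f + norm c * L1norm M h"
      by (rule L1norm_eq_pointwise_combination[OF L1set_add[OF f(1) L1set_scalar[OF g]] f(1) h(1)])
    thus ?thesis
      by (simp add: h(2) a_def algebra_simps)
  qed
  moreover have "1 \<le> norm (1 + c) + norm c" for c :: 'k
    using norm_triangle_ineq4[of "1 + c" c] by simp
  ultimately have "bj_orth sc M f ?g"
    unfolding bj_orth_def using a by (simp flip: a_def)
  hence "bj_orth sc M ?g f"
    using symmetric g unfolding left_symmetric_def by blast
  hence "L1norm M ?g \<le> L1norm M (\<lambda>s. ?g s + sc (-1) (f s))"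
    unfolding bj_orth_def by blast
  moreover have "L1norm M ?g = 1 * L1norm M f + 1 * L1norm M h"
    by (rule L1norm_eq_pointwise_combination[OF g f(1) h(1)]) (metis disjoint add_0 add_0_right mult_1 norm_zero)
  moreover have "L1norm M (\<lambda>s. ?g s + sc (-1) (f s)) = 0 * L1norm M f + 1 * L1norm M h"
    by (rule L1norm_eq_pointwise_combination[OF L1set_add[OF g L1set_scalar[OF f(1)]] f(1) h(1)])
       (simp add: of_real[of "-1", simplified])
  ultimately show False
    using a unfolding a_def h(2) by simp
qed

lemma left_symmetric_AE_nonzero:
  assumes "sigma_finite_measure M" and f: "f \<in> L1set M" "L1norm M f \<noteq> 0"
    and symmetric: "left_symmetric sc M f"
  shows "AE s in M. f s \<noteq> 0"
proof (rule ccontr)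
  assume not_AE: "\<not> (AE s in M. f s \<noteq> 0)"
  note Z = sets_zero_L1set[OF f(1)]
  have "(AE s in M. f s \<noteq> 0) \<longleftrightarrow> emeasure M {s \<in> space M. f s = 0} = 0"
    by (rule AE_iff_measurable[OF Z]) simp
  with not_AE obtain B where
    B: "B \<in> sets M" "B \<subseteq> {s \<in> space M. f s = 0}" "0 < emeasure M B" "emeasure M B < \<infinity>"
    using sigma_finite_measure.obtain_positive_finite_subset[OF assms(1) Z] by blast
  obtain s0 where "f s0 \<noteq> 0"
    using ex_nonzero_of_L1norm[OF f(2)] by blast
  from ex_L1set_supported_on[OF B(1,3,4) this L1norm_nonneg[of M f]]
  obtain h :: "'s \<Rightarrow> 'x"
    where h: "h \<in> L1set M" "L1norm M h = L1norm M f" and outside: "\<forall>s. s \<notin> B \<longrightarrow> h s = 0"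
    by blast
  have "f s = 0 \<or> h s = 0" for s
    using B(2) outside by blast
  with not_left_symmetric_disjoint_support[OF f h] symmetric show False
    by blast
qed

lemma L1_dualD:
  assumes "F \<in> L1_dual sc M"
  shows "\<And>g h. g \<in> L1set M \<Longrightarrow> h \<in> L1set M \<Longrightarrow> F (\<lambda>s. g s + h s) = F g + F h"
    and "\<And>c g. g \<in> L1set M \<Longrightarrow> F (\<lambda>s. sc c (g s)) = c * F g"
    and "\<exists>K. \<forall>g \<in> L1set M. norm (F g) \<le> K * L1norm M g"
  using assms unfolding L1_dual_def by auto

lemma norm_L1_dual_le:
  assumes F: "F \<in> L1_dual sc M" and g: "g \<in> L1set M"
  shows "norm (F g) \<le> dual_norm M F * L1norm M g"
proof -
  obtain K where K: "\<And>g. g \<in> L1set M \<Longrightarrow> norm (F g) \<le> K * L1norm M g"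
    using L1_dualD(3)[OF F] by blast
  have "bdd_above ((\<lambda>g. norm (F g)) ` {g \<in> L1set M. L1norm M g \<le> 1})"
  proof (rule bdd_aboveI2)
    fix g :: "'s \<Rightarrow> 'x"
    assume "g \<in> {g \<in> L1set M. L1norm M g \<le> 1}"
    hence "norm (F g) \<le> K * L1norm M g" "L1norm M g \<le> 1"
      using K by auto
    thus "norm (F g) \<le> max K 0"
      by (smt (verit, best) L1norm_nonneg mult_left_le mult_nonpos_nonneg)
  qed
  hence unit_ball: "norm (F g) \<le> dual_norm M F" if "g \<in> L1set M" "L1norm M g \<le> 1" for g
    unfolding dual_norm_def using that by (intro cSUP_upper) auto
  show ?thesis
  proof (cases "L1norm M g = 0")
    case True
    thus ?thesis
      using K[OF g] by simp
  next
    case False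
    define r where "r = L1norm M g"
    have r: "r > 0"
      using L1norm_pos[OF False] unfolding r_def .
    have nr: "norm (1 / (of_real r :: 'k)) = 1 / r"
      using r by (simp add: norm_divide)
    let ?g = "\<lambda>s. sc (1 / of_real r) (g s)"
    have "L1norm M ?g = 1"
      using r nr by (simp add: L1norm_scalar[OF g] flip: r_def)
    hence "norm (F ?g) \<le> dual_norm M F"
      by (intro unit_ball L1set_scalar g) simp
    moreover have "F ?g = (1 / of_real r) * F g"
      by (rule L1_dualD(2)[OF F g])
    ultimately have "norm (F g) / r \<le> dual_norm M F"
      using r by (simp add: norm_divide)
    thus ?thesis
      using r unfolding r_def by (simp add: divide_le_eq mult.commute)
  qed
qed

lemma norm_support_functional_le:
  "support_functional sc M f F \<Longrightarrow> g \<in> L1set M \<Longrightarrow> norm (F g) \<le> L1norm M g"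
  using norm_L1_dual_le[of F g] unfolding support_functional_def by simp

lemma dual_norm_eq_1:
  assumes F: "F \<in> L1_dual sc M" and bound: "\<And>g. g \<in> L1set M \<Longrightarrow> norm (F g) \<le> L1norm M g"
    and f: "f \<in> L1set M" "L1norm M f \<noteq> 0" and Ff: "F f = of_real (L1norm M f)"
  shows "dual_norm M F = 1"
  unfolding dual_norm_def
proof (rule cSup_eq_maximum)
  define a where "a = L1norm M f"
  have a: "a > 0"
    using L1norm_pos[OF f(2)] unfolding a_def .
  let ?g = "\<lambda>s. sc (of_real (1 / a)) (f s)"
  have "norm (of_real (1 / a) :: 'k) = 1 / a"
    using a by (simp only: norm_of_real) simp
  hence "?g \<in> L1set M" "L1norm M ?g = 1" "F ?g = 1"
    using a by (simp_all add: L1set_scalar L1norm_scalar L1_dualD(2)[OF F] f Ff a_def flip: of_real_mult)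
  thus "1 \<in> (\<lambda>g. norm (F g)) ` {g \<in> L1set M. L1norm M g \<le> 1}"
    by (intro image_eqI[of _ _ ?g]) auto
next
  fix x
  assume "x \<in> (\<lambda>g. norm (F g)) ` {g \<in> L1set M. L1norm M g \<le> 1}"
  thus "x \<le> 1"
    using bound by force
qed

end

section \<open>Differentiability of the \<open>L\<^sup>1\<close> norm and support functionals\<close>

definition L1norm_deriv :: "'s measure \<Rightarrow> ('s \<Rightarrow> 'x::real_normed_vector) \<Rightarrow> ('s \<Rightarrow> 'x) \<Rightarrow> real" where
  "L1norm_deriv M f h = (\<integral>s. norm_deriv (f s) (h s) \<partial>M)"

locale L1_space_smooth_norm = L1_space sc M
  for sc :: "'k::real_normed_field \<Rightarrow> 'x::real_normed_vector \<Rightarrow> 'x" and M :: "'s measure" +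
  assumes frechet: "frechet_diff_norm TYPE('x)" and nontrivial: "\<exists>x::'x. x \<noteq> 0"
begin

lemma bounded_linear_scalar_norm_deriv': "bounded_linear (scalar_norm_deriv :: 'k \<Rightarrow> real)"
  using nontrivial bounded_linear_scalar_norm_deriv[OF frechet] by blast

lemma scalar_norm_deriv_mult_of_real: "scalar_norm_deriv (c * of_real r) = r * scalar_norm_deriv (c :: 'k)"
  using linear_scale[OF bounded_linear.linear[OF bounded_linear_scalar_norm_deriv'], of r c]
  by (simp add: scaleR_conv_of_real mult.commute)

lemma scalar_norm_deriv_mult_cancel:
  "(\<And>c. scalar_norm_deriv (c * z) = scalar_norm_deriv (c * w)) \<Longrightarrow> z = (w :: 'k)"
  using real_functional_representation_unique bounded_linear.linear[OF bounded_linear_scalar_norm_deriv'] scalar_norm_deriv_1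
  by metis

lemma borel_measurable_norm_deriv:
  assumes f: "(f :: 's \<Rightarrow> 'x) \<in> L1set M" and h: "h \<in> L1set M"
  shows "(\<lambda>s. norm_deriv (f s) (h s)) \<in> borel_measurable M"
proof (rule borel_measurable_LIMSEQ_real)
  define t where "t n = 1 / real (Suc n)" for n
  have "t \<longlonglongrightarrow> 0" "t n \<noteq> 0" for n
    unfolding t_def using LIMSEQ_Suc[OF lim_1_over_n] by simp_all
  show "(\<lambda>n. if f s = 0 then 0 else (norm (f s + t n *\<^sub>R h s) - norm (f s)) / t n) \<longlonglongrightarrow> norm_deriv (f s) (h s)"
    for s
  proof (cases "f s = 0")
    case False
    with norm_deriv_directional[OF frechet False, of "h s"] \<open>t \<longlonglongrightarrow> 0\<close> \<open>\<And>n. t n \<noteq> 0\<close>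
    show ?thesis
      unfolding DERIV_def tendsto_at_iff_sequentially by (auto simp: o_def)
  qed (simp add: norm_deriv_def)
  from sets_zero_L1set[OF f]
  show "(\<lambda>s. if f s = 0 then 0 else (norm (f s + t n *\<^sub>R h s) - norm (f s)) / t n) \<in> borel_measurable M"
    for n
    using borel_measurable_difference_quotient[OF f h] by measurable
qed

lemma integrable_norm_deriv:
  assumes "(f :: 's \<Rightarrow> 'x) \<in> L1set M" and "h \<in> L1set M"
  shows "integrable M (\<lambda>s. norm_deriv (f s) (h s))"
  using integrable_norm_L1set[OF assms(2)] borel_measurable_norm_deriv[OF assms]
  by (rule Bochner_Integration.integrable_bound) (simp add: abs_norm_deriv_le[OF frechet])

lemma L1norm_deriv_add:
  assumes "(f :: 's \<Rightarrow> 'x) \<in> L1set M" and "g \<in> L1set M" and "h \<in> L1set M"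
  shows "L1norm_deriv M f (\<lambda>s. g s + h s) = L1norm_deriv M f g + L1norm_deriv M f h"
  unfolding L1norm_deriv_def
  using linear_add[OF bounded_linear.linear[OF bounded_linear_norm_deriv[OF frechet]]]
    integrable_norm_deriv[OF assms(1,2)] integrable_norm_deriv[OF assms(1,3)]
  by simp

lemma L1norm_deriv_scaleR: "L1norm_deriv M (f :: 's \<Rightarrow> 'x) (\<lambda>s. r *\<^sub>R h s) = r * L1norm_deriv M f h"
  unfolding L1norm_deriv_def
  using linear_scale[OF bounded_linear.linear[OF bounded_linear_norm_deriv[OF frechet]]] by simp

lemma abs_L1norm_deriv_le:
  assumes "(f :: 's \<Rightarrow> 'x) \<in> L1set M" and "h \<in> L1set M"
  shows "\<bar>L1norm_deriv M f h\<bar> \<le> L1norm M h"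
proof -
  have "\<bar>L1norm_deriv M f h\<bar> \<le> (\<integral>s. \<bar>norm_deriv (f s) (h s)\<bar> \<partial>M)"
    unfolding L1norm_deriv_def by (rule integral_abs_bound)
  also have "\<dots> \<le> (\<integral>s. norm (h s) \<partial>M)"
    using integrable_norm_deriv[OF assms] integrable_norm_L1set[OF assms(2)]
    by (intro integral_mono) (simp_all add: abs_norm_deriv_le[OF frechet])
  finally show ?thesis
    using L1norm_eq_integral[OF assms(2)] by simp
qed

lemma L1norm_deriv_scalar_self:
  assumes "(f :: 's \<Rightarrow> 'x) \<in> L1set M"
  shows "L1norm_deriv M f (\<lambda>s. sc c (f s)) = scalar_norm_deriv c * L1norm M f"
  unfolding L1norm_deriv_def L1norm_eq_integral[OF assms] norm_deriv_scalar_self[OF frechet]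
  by simp

lemma has_real_derivative_L1norm:
  assumes f: "(f :: 's \<Rightarrow> 'x) \<in> L1set M" and h: "h \<in> L1set M" and nonzero: "AE s in M. f s \<noteq> 0"
  shows "((\<lambda>t. L1norm M (\<lambda>s. f s + t *\<^sub>R h s)) has_real_derivative L1norm_deriv M f h) (at 0)"
proof -
  let ?N = "\<lambda>t. L1norm M (\<lambda>s. f s + t *\<^sub>R h s)"
  let ?q = "\<lambda>t s. (norm (f s + t *\<^sub>R h s) - norm (f s)) / t"
  have quotient: "(?N t - ?N 0) / t = (\<integral>s. ?q t s \<partial>M)" for t
    using integrable_norm_L1set[OF L1set_add[OF f L1set_scaleR[OF h]]] integrable_norm_L1set[OF f]
    by (simp add: L1norm_eq_integral[OF L1set_add[OF f L1set_scaleR[OF h]]] L1norm_eq_integral[OF f])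
  have "((\<lambda>t. \<integral>s. ?q t s \<partial>M) \<longlongrightarrow> L1norm_deriv M f h) (at 0)"
    unfolding tendsto_at_iff_sequentially L1norm_deriv_def o_def
  proof (intro allI impI)
    fix t :: "nat \<Rightarrow> real"
    assume t: "\<forall>n. t n \<in> UNIV - {0}" "t \<longlonglongrightarrow> 0"
    show "(\<lambda>n. \<integral>s. ?q (t n) s \<partial>M) \<longlonglongrightarrow> (\<integral>s. norm_deriv (f s) (h s) \<partial>M)"
    proof (rule integral_dominated_convergence[where w = "\<lambda>s. norm (h s)"])
      show "AE s in M. (\<lambda>n. ?q (t n) s) \<longlonglongrightarrow> norm_deriv (f s) (h s)"
        using nonzero
      proof eventually_elim
        case (elim s)
        with norm_deriv_directional[OF frechet elim, of "h s"] t show ?case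
          unfolding DERIV_def tendsto_at_iff_sequentially by (auto simp: o_def)
      qed
      show "AE s in M. norm (?q (t n) s) \<le> norm (h s)" for n
        unfolding real_norm_def by (intro AE_I2 abs_norm_difference_quotient_le)
    qed (simp_all add: borel_measurable_norm_deriv[OF f h] borel_measurable_difference_quotient[OF f h]
        integrable_norm_L1set[OF h])
  qed
  moreover have "(\<lambda>t. (?N (0 + t) - ?N 0) / t) = (\<lambda>t. \<integral>s. ?q t s \<partial>M)"
    by (simp only: add_0_left quotient)
  ultimately show ?thesis
    unfolding DERIV_def by simp
qed

lemma support_functional_deriv:
  assumes f: "f \<in> L1set M" "L1norm M f \<noteq> 0" and nonzero: "AE s in M. f s \<noteq> 0"
    and G: "support_functional sc M f G" and h: "h \<in> L1set M"
  shows "scalar_norm_deriv (G h) = L1norm_deriv M f h"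
proof -
  define a where "a = L1norm M f"
  have a: "a > 0"
    using L1norm_pos[OF f(2)] unfolding a_def .
  obtain x :: 'x where "x \<noteq> 0"
    using nontrivial by blast
  \<comment> \<open>\<open>t \<mapsto> norm (G (f + t h))\<close> touches \<open>t \<mapsto> L1norm (f + t h)\<close> from below at \<open>t = 0\<close>\<close>
  let ?N = "\<lambda>t. L1norm M (\<lambda>s. f s + t *\<^sub>R h s)"
  let ?n = "\<lambda>t. norm (of_real a + of_real t * G h)"
  have "((\<lambda>t. ?N t - ?n t) has_real_derivative L1norm_deriv M f h - scalar_norm_deriv (G h)) (at 0)"
    using has_real_derivative_L1norm[OF f(1) h nonzero]
      has_real_derivative_norm_affine[OF frechet \<open>x \<noteq> 0\<close> a]
    by (rule DERIV_diff)
  moreover have "?N 0 - ?n 0 \<le> ?N t - ?n t" for t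
  proof -
    have GD: "G \<in> L1_dual sc M" and Gf: "G f = of_real a"
      using G unfolding support_functional_def a_def by auto
    have "G (\<lambda>s. f s + t *\<^sub>R h s) = G (\<lambda>s. f s + sc (of_real t) (h s))"
      by (simp add: of_real)
    also have "\<dots> = of_real a + of_real t * G h"
      using L1_dualD[OF GD] f(1) h Gf by (simp add: L1set_scalar)
    finally have "G (\<lambda>s. f s + t *\<^sub>R h s) = of_real a + of_real t * G h" .
    hence "?n t = norm (G (\<lambda>s. f s + t *\<^sub>R h s))"
      by simp
    also have "\<dots> \<le> ?N t"
      by (rule norm_support_functional_le[OF G L1set_add[OF f(1) L1set_scaleR[OF h]]])
    finally show ?thesis
      using a unfolding a_def by simp
  qed
  ultimately have "L1norm_deriv M f h - scalar_norm_deriv (G h) = 0"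
    by (intro DERIV_local_min[where d = 1]) auto
  thus ?thesis
    by simp
qed

lemma support_functional_unique:
  assumes f: "f \<in> L1set M" "L1norm M f \<noteq> 0" and nonzero: "AE s in M. f s \<noteq> 0"
    and F: "support_functional sc M f F" and G: "support_functional sc M f G" and g: "g \<in> L1set M"
  shows "F g = G g"
proof -
  have rep: "scalar_norm_deriv (c * H g) = L1norm_deriv M f (\<lambda>s. sc c (g s))"
    if H: "support_functional sc M f H" for H c
  proof -
    have "H (\<lambda>s. sc c (g s)) = c * H g"
      using H g L1_dualD(2) unfolding support_functional_def by blast
    thus ?thesis
      using support_functional_deriv[OF f nonzero H L1set_scalar[OF g, where c = c]] by simp
  qed
  show ?thesis
    by (rule scalar_norm_deriv_mult_cancel) (simp add: rep[OF F] rep[OF G])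
qed

lemma support_functional_of_representation:
  assumes f: "f \<in> L1set M" "L1norm M f \<noteq> 0"
    and rep: "\<And>g c. g \<in> L1set M \<Longrightarrow> scalar_norm_deriv (c * F g) = L1norm_deriv M f (\<lambda>s. sc c (g s))"
  shows "support_functional sc M f F"
proof -
  have add: "F (\<lambda>s. g s + h s) = F g + F h" if g: "g \<in> L1set M" and h: "h \<in> L1set M" for g h
  proof (rule scalar_norm_deriv_mult_cancel)
    fix c
    have "scalar_norm_deriv (c * F (\<lambda>s. g s + h s)) = L1norm_deriv M f (\<lambda>s. sc c (g s) + sc c (h s))"
      using rep[OF L1set_add[OF g h]] by (simp add: add_right)
    also have "\<dots> = scalar_norm_deriv (c * F g) + scalar_norm_deriv (c * F h)"
      using g h by (simp add: L1norm_deriv_add[OF f(1)] L1set_scalar rep)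
    also have "\<dots> = scalar_norm_deriv (c * (F g + F h))"
      by (simp add: distrib_left linear_add[OF bounded_linear.linear[OF bounded_linear_scalar_norm_deriv']])
    finally show "scalar_norm_deriv (c * F (\<lambda>s. g s + h s)) = scalar_norm_deriv (c * (F g + F h))" .
  qed
  have scalar: "F (\<lambda>s. sc c (g s)) = c * F g" if "g \<in> L1set M" for c g
    using that by (intro scalar_norm_deriv_mult_cancel) (simp add: rep L1set_scalar flip: mult mult.assoc)
  have bound: "norm (F g) \<le> L1norm M g" if g: "g \<in> L1set M" for g
  proof (cases "F g = 0")
    case False
    define c where "c = of_real (norm (F g)) / F g"
    have "norm c = 1" "c * F g = of_real (norm (F g))"
      using False unfolding c_def by (simp_all add: norm_divide)
    hence "norm (F g) = L1norm_deriv M f (\<lambda>s. sc c (g s))"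
      using rep[OF g, of c] scalar_norm_deriv_mult_of_real[of 1] scalar_norm_deriv_1[where 'k = 'k] by simp
    also have "\<dots> \<le> L1norm M g"
      using abs_L1norm_deriv_le[OF f(1) L1set_scalar[OF g, where c = c]] \<open>norm c = 1\<close>
      by (simp add: L1norm_scalar[OF g])
    finally show ?thesis .
  qed simp
  have Ff: "F f = of_real (L1norm M f)"
    using f(1) by (intro scalar_norm_deriv_mult_cancel)
      (simp add: rep L1norm_deriv_scalar_self scalar_norm_deriv_mult_of_real mult.commute)
  have "F \<in> L1_dual sc M"
    unfolding L1_dual_def using add scalar bound by (auto intro!: exI[of _ 1])
  with dual_norm_eq_1[OF _ bound f Ff] Ff show ?thesis
    unfolding support_functional_def by simp
qed

lemma ex_support_functional:
  assumes f: "f \<in> L1set M" "L1norm M f \<noteq> 0"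
  shows "\<exists>F. support_functional sc M f F"
proof -
  have "\<exists>z. \<forall>c. scalar_norm_deriv (c * z) = L1norm_deriv M f (\<lambda>s. sc c (g s))" if g: "g \<in> L1set M" for g
  proof (rule real_functional_representation[OF bounded_linear_scalar_norm_deriv' scalar_norm_deriv_1])
    show "linear (\<lambda>c. L1norm_deriv M f (\<lambda>s. sc c (g s)))"
      by (rule linearI)
        (simp_all add: add_left L1norm_deriv_add[OF f(1)] L1set_scalar[OF g] scaleR_conv_of_real
          mult of_real L1norm_deriv_scaleR)
  qed
  then obtain F
    where "\<And>g c. g \<in> L1set M \<Longrightarrow> scalar_norm_deriv (c * F g) = L1norm_deriv M f (\<lambda>s. sc c (g s))"
    by metis
  thus ?thesis
    using support_functional_of_representation[OF f] by blast
qed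

end

theorem corollary3p5:
  fixes M :: "'s measure"
    and sc :: "'k::real_normed_field \<Rightarrow> 'x::banach \<Rightarrow> 'x"
    and f :: "'s \<Rightarrow> 'x"
  assumes "complete_measure M"
    and "sigma_finite_measure M"
    and "scalar_action sc"
    and "frechet_diff_norm TYPE('x)"
    and "f \<in> L1set M"
    and "L1norm M f \<noteq> 0"
    and "left_symmetric sc M f"
  shows "smooth_point sc M f"
proof -
  interpret L1_space_smooth_norm sc M
    using assms(1,3,4) ex_nonzero_of_L1norm[OF assms(6)]
    by (intro L1_space_smooth_norm.intro L1_space.intro normed_space_over.intro
        L1_space_smooth_norm_axioms.intro) auto
  have "AE s in M. f s \<noteq> 0"
    by (rule left_symmetric_AE_nonzero[OF assms(2,5,6,7)])
  thus ?thesis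
    unfolding smooth_point_def
    using assms(5,6) ex_support_functional[OF assms(5,6)] support_functional_unique[OF assms(5,6)]
    by blast
qed

end
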